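(* Let $\alpha\in(0,1)$ and let $a:[0,+\infty)\to\mathbb{R}$ be continuous. Assume that \[ \int_{0}^{+\infty}t|a(t)|\,dt+\sup_{t>0}t^{1-\alpha}\int_{0}^{t}\frac{s|a(s)|}{(t-s)^{1-\alpha}}\,ds<+\infty \] and \[ \frac{1}{\Gamma(\alpha)}\left(\int_{0}^{+\infty}\frac{|a(s)|}{s^{1-\alpha}}\,ds+\chi\right)=k_{3}<1,\qquad \chi=\sup_{t>0}t^{1-\alpha}\int_{0}^{t}\frac{|a(s)|}{(t-s)^{1-\alpha}s^{1-\alpha}}\,ds . \] Then, for any given real numbers $c$ and $b\neq0$, the fractional differential equation \[ {}_{0}D_{t}^{\alpha}\big(t x'(t)-x(t)\big)+a(t)x(t)=0,\qquad t>0, \] has a solution $x\in C^{1}((0,+\infty),\mathbb{R})$ with the asymptotic formula \[ x(t)=[c+O(1)]\,t^{\alpha-1}+bt=bt+O(t^{\alpha-1})\quad\text{as }t\to+\infty . \]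
   Context: $\Gamma$ is Euler's Gamma function. For a function $f\in C((0,+\infty),\mathbb{R})$ with $\lim_{t\searrow 0}t^{1-\alpha}f(t)\in\mathbb{R}$, the Riemann–Liouville derivative of order $\alpha\in(0,1)$ is $({}_{0}D_{t}^{\alpha}f)(t)=\frac{1}{\Gamma(1-\alpha)}\frac{d}{dt}\left[\int_{0}^{t}\frac{f(s)}{(t-s)^{\alpha}}\,ds\right]$, $t>0$. The operator in the equation is the Riemann–Liouville derivative applied to $tx'-x$. (In the paper the constant $c$ is denoted $a$; it is renamed here to avoid a clash with the coefficient $a(t)$.) *)

theory Defs
  imports "HOL-Analysis.Analysis" "HOL-Library.Landau_Symbols"
begin

definition RL_admissible :: "real \<Rightarrow> (real \<Rightarrow> real) \<Rightarrow> bool" where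
  "RL_admissible \<alpha> f \<longleftrightarrow> continuous_on {0<..} f \<and>
     (\<exists>L. ((\<lambda>t. t powr (1 - \<alpha>) * f t) \<longlongrightarrow> L) (at_right 0))"

definition RL_aux_int :: "real \<Rightarrow> (real \<Rightarrow> real) \<Rightarrow> real \<Rightarrow> real" where
  "RL_aux_int \<alpha> f t = (LINT s:{0<..<t}|lborel. f s / (t - s) powr \<alpha>)"

definition has_RL_derivative_at :: "real \<Rightarrow> (real \<Rightarrow> real) \<Rightarrow> real \<Rightarrow> real \<Rightarrow> bool" where
  "has_RL_derivative_at \<alpha> f D t \<longleftrightarrow>
     (\<exists>D'. (RL_aux_int \<alpha> f has_real_derivative D') (at t) \<and> D = D' / Gamma (1 - \<alpha>))"

end

theory Submission
  imports Defs
begin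

text \<open>For a bounded continuous \<open>V\<close> on \<open>\<real>\<close> put \<open>x(t) = b t + t\<^sup>\<alpha>\<^sup>-\<^sup>1 V(ln t)\<close>. If \<open>x\<close> solves
  the integral equation \<open>x(t) = b t + t/\<Gamma>(\<alpha>) \<integral>\<^sub>t\<^sup>\<infinity> F(s)/s\<^sup>2 ds\<close>, where
  \<open>F(s) = \<integral>\<^sub>0\<^sup>s a(u) x(u) (s - u)\<^sup>\<alpha>\<^sup>-\<^sup>1 du\<close>, then differentiation gives \<open>t x' - x = -F/\<Gamma>(\<alpha>)\<close>,
  and Abel's identity \<open>I\<^sup>1\<^sup>-\<^sup>\<alpha> I\<^sup>\<alpha> = I\<^sup>1\<close> shows that the Riemann--Liouville derivative of
  \<open>-F/\<Gamma>(\<alpha>)\<close> is \<open>-a x\<close>. The two suprema \<open>\<kappa>\<close> and \<open>\<chi>\<close> of the hypotheses give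
  \<open>|F(s)| \<le> (\<kappa> B + \<chi> M) s\<^sup>\<alpha>\<^sup>-\<^sup>1\<close> whenever \<open>|x(t)| \<le> B t + M t\<^sup>\<alpha>\<^sup>-\<^sup>1\<close>, so the integral equation,
  read as a fixed point problem for \<open>V\<close>, is a contraction with constant \<open>\<chi>/\<Gamma>(\<alpha>) < 1\<close>.
  Boundedness of the fixed point \<open>V\<close> is the asymptotic formula.\<close>

section \<open>Integrals on intervals\<close>

lemma powr_minus_one_minus: "(x::real) powr (\<alpha> - 1) = 1 / x powr (1 - \<alpha>)"
  by (metis minus_diff_eq powr_minus_divide)

lemma indicator_affine_Ioo:
  fixes p q v :: real assumes "p < q"
  shows "(indicator {p<..<q} (p + (q - p) * v) :: real) = indicator {0<..<1} v"
proof -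
  have c: "q - p > 0" using assms by simp
  have "p < p + (q - p) * v \<longleftrightarrow> 0 < v" using c by (simp add: zero_less_mult_iff)
  moreover have "p + (q - p) * v < q \<longleftrightarrow> (q - p) * v < (q - p) * 1" by argo
  moreover have "(q - p) * v < (q - p) * 1 \<longleftrightarrow> v < 1" using c by (rule mult_less_cancel_left_pos)
  ultimately show ?thesis by (auto simp: indicator_def)
qed

lemma set_integrable_Ioo_affine_iff:
  fixes F :: "real \<Rightarrow> real" assumes "p < q"
  shows "set_integrable lborel {p<..<q} F \<longleftrightarrow>
    set_integrable lborel {0<..<1} (\<lambda>v. F (p + (q - p) * v))"
proof -
  have "set_integrable lborel {p<..<q} F \<longleftrightarrow>
     integrable lborel (\<lambda>v. indicator {p<..<q} (p + (q - p) * v) *\<^sub>R F (p + (q - p) * v))"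
    unfolding set_integrable_def using assms
    by (subst lborel_integrable_real_affine_iff[symmetric, where c="q - p" and t=p]) auto
  thus ?thesis using indicator_affine_Ioo[OF assms] by (simp add: set_integrable_def)
qed

lemma set_integral_Ioo_affine:
  fixes F :: "real \<Rightarrow> real" assumes "p < q"
  shows "(LINT u:{p<..<q}|lborel. F u) = (q - p) * (LINT v:{0<..<1}|lborel. F (p + (q - p) * v))"
proof -
  have "(LINT u:{p<..<q}|lborel. F u) = \<bar>q - p\<bar> *\<^sub>R
     (\<integral>v. indicator {p<..<q} (p + (q - p) * v) *\<^sub>R F (p + (q - p) * v) \<partial>lborel)"
    unfolding set_lebesgue_integral_def using assms
    by (subst lborel_integral_real_affine[where c="q - p" and t=p]) auto
  thus ?thesis using indicator_affine_Ioo[OF assms] assms by (simp add: set_lebesgue_integral_def)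
qed

lemma set_integrable_Beta:
  fixes p q :: real assumes "p > 0" "q > 0"
  shows "set_integrable lborel {0<..<1} (\<lambda>v. v powr (p - 1) * (1 - v) powr (q - 1))"
  by (rule set_integrable_subset[OF integrable_Beta[OF assms]]) auto

lemma set_integral_Beta:
  fixes p q :: real assumes "p > 0" "q > 0"
  shows "(LINT v:{0<..<1}|lborel. v powr (p - 1) * (1 - v) powr (q - 1)) = Beta p q"
proof -
  have "((\<lambda>v. v powr (p - 1) * (1 - v) powr (q - 1)) has_integral Beta p q) {0<..<1}"
    using has_integral_Beta_real[OF assms] by (simp add: has_integral_Icc_iff_Ioo)
  thus ?thesis
    using set_borel_integral_eq_integral(2)[OF set_integrable_Beta[OF assms]]
    by (simp add: integral_unique)
qed

lemma set_integrable_one_minus_powr: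
  assumes "\<alpha> > 0"
  shows "set_integrable lborel {0<..<1} (\<lambda>v::real. (1 - v) powr (\<alpha> - 1))"
proof -
  have "set_integrable lborel {0<..<1} (\<lambda>v::real. v powr (1 - 1) * (1 - v) powr (\<alpha> - 1))"
    using set_integrable_Beta[of 1 \<alpha>] assms by simp
  thus ?thesis by (rule set_integrable_cong[THEN iffD1, rotated -1]) auto
qed

lemma set_integrable_powr_at_0:
  fixes p t :: real assumes "p > -1" "t > 0"
  shows "set_integrable lborel {0<..<t} (\<lambda>s. s powr p)"
proof -
  have "(\<lambda>s. s powr p) absolutely_integrable_on {0<..t}"
    using assms by (intro nonnegative_absolutely_integrable_1 integrable_on_powr_from_0') auto
  hence "set_integrable lborel {0<..t} (\<lambda>s. s powr p)"
    unfolding set_integrable_def by (subst integrable_completion[symmetric]) auto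
  thus ?thesis by (rule set_integrable_subset) auto
qed

lemma
  fixes p t :: real assumes "p < -1" "t > 0"
  shows set_integrable_powr_at_top: "set_integrable lborel {t..} (\<lambda>s. s powr p)"
    and set_integral_powr_at_top: "(LINT s:{t..}|lborel. s powr p) = - (t powr (p + 1)) / (p + 1)"
proof -
  have I: "((\<lambda>s. s powr p) has_integral - (t powr (p + 1)) / (p + 1)) {t..}"
    by (rule has_integral_powr_to_inf[OF assms])
  have "(\<lambda>s. s powr p) absolutely_integrable_on {t..}"
    using I assms by (intro nonnegative_absolutely_integrable_1) auto
  thus S: "set_integrable lborel {t..} (\<lambda>s. s powr p)"
    unfolding set_integrable_def by (subst integrable_completion[symmetric]) auto
  show "(LINT s:{t..}|lborel. s powr p) = - (t powr (p + 1)) / (p + 1)"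
    using set_borel_integral_eq_integral(2)[OF S] I by (simp add: integral_unique)
qed

lemma
  fixes f g :: "real \<Rightarrow> real"
  assumes A: "A \<in> sets borel" and f: "continuous_on A f" and g: "set_integrable lborel A g"
    and le: "\<And>x. x \<in> A \<Longrightarrow> \<bar>f x\<bar> \<le> g x"
  shows set_integrable_continuous_dominated: "set_integrable lborel A f"
    and set_integral_abs_le_dominated: "\<bar>LINT x:A|lborel. f x\<bar> \<le> (LINT x:A|lborel. g x)"
proof -
  show I: "set_integrable lborel A f"
  proof (rule set_integrable_bound[OF g])
    show "set_borel_measurable lborel A f"
      using set_measurable_continuous_on[OF A f] by (simp add: set_borel_measurable_def)
    show "AE x in lborel. x \<in> A \<longrightarrow> norm (f x) \<le> norm (g x)"
      using le by (intro AE_I2) force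
  qed
  have "\<bar>LINT x:A|lborel. f x\<bar> \<le> (LINT x:A|lborel. \<bar>f x\<bar>)"
    using set_integral_norm_bound[OF I] by simp
  also have "\<dots> \<le> (LINT x:A|lborel. g x)"
    using set_integrable_abs[OF I] g le by (intro set_integral_mono) auto
  finally show "\<bar>LINT x:A|lborel. f x\<bar> \<le> (LINT x:A|lborel. g x)" .
qed

lemma has_real_derivative_set_integral_atLeast:
  fixes G :: "real \<Rightarrow> real"
  assumes G: "continuous_on {0<..} G" "\<And>t. t > 0 \<Longrightarrow> set_integrable lborel {t..} G"
    and t0: "t0 > 0"
  shows "((\<lambda>t. LINT s:{t..}|lborel. G s) has_real_derivative - G t0) (at t0)"
proof -
  define c R where "c = t0 / 2" and "R = 2 * t0"
  have cR: "0 < c" "c < t0" "t0 < R" using t0 by (auto simp: c_def R_def)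
  have split: "(LINT s:{t..}|lborel. G s) = integral {t..R} G + (LINT s:{R<..}|lborel. G s)"
    if "t \<in> {c<..<R}" for t
  proof -
    have i1: "set_integrable lborel {t..R} G" and i2: "set_integrable lborel {R<..} G"
      using that cR by (auto intro: set_integrable_subset[OF G(2)])
    have "{t..} = {t..R} \<union> {R<..}" using that by auto
    moreover have "(LINT s:{t..R} \<union> {R<..}|lborel. G s) =
        (LINT s:{t..R}|lborel. G s) + (LINT s:{R<..}|lborel. G s)"
      by (rule set_integral_Un[OF _ i1 i2]) auto
    ultimately have "(LINT s:{t..}|lborel. G s) =
        (LINT s:{t..R}|lborel. G s) + (LINT s:{R<..}|lborel. G s)"
      by simp
    thus ?thesis using set_borel_integral_eq_integral(2)[OF i1] by simp
  qed
  have "((\<lambda>x. integral {x..R} G) has_real_derivative - G t0) (at t0 within {c..R})"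
    by (rule integral_has_real_derivative') (use cR in \<open>auto intro: continuous_on_subset[OF G(1)]\<close>)
  moreover have "at t0 within {c..R} = at t0" using cR by (intro at_within_Icc_at) auto
  ultimately have "((\<lambda>x. integral {x..R} G + (LINT s:{R<..}|lborel. G s)) has_real_derivative - G t0) (at t0)"
    by (auto intro!: derivative_eq_intros)
  thus ?thesis
    by (rule has_field_derivative_transform_within_open[of _ _ _ "{c<..<R}"]) (use cR split in auto)
qed

lemma has_real_derivative_set_integral_Ioo:
  fixes g :: "real \<Rightarrow> real"
  assumes g: "continuous_on {0<..} g" "\<And>t. t > 0 \<Longrightarrow> set_integrable lborel {0<..<t} g"
    and t0: "t0 > 0"
  shows "((\<lambda>t. LINT u:{0<..<t}|lborel. g u) has_real_derivative g t0) (at t0)"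
proof -
  define c R where "c = t0 / 2" and "R = 2 * t0"
  have cR: "0 < c" "c < t0" "t0 < R" using t0 by (auto simp: c_def R_def)
  have split: "(LINT u:{0<..<t}|lborel. g u) = (LINT u:{0<..<c}|lborel. g u) + integral {c..t} g"
    if "t \<in> {c<..<R}" for t
  proof -
    have i1: "set_integrable lborel {0<..<c} g" and i2: "set_integrable lborel {c..<t} g"
      using that cR by (auto intro!: set_integrable_subset[OF g(2)[of t]])
    have "{0<..<t} = {0<..<c} \<union> {c..<t}" using that cR by auto
    moreover have "(LINT u:{0<..<c} \<union> {c..<t}|lborel. g u) =
        (LINT u:{0<..<c}|lborel. g u) + (LINT u:{c..<t}|lborel. g u)"
      by (rule set_integral_Un[OF _ i1 i2]) auto
    ultimately have "(LINT u:{0<..<t}|lborel. g u) =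
        (LINT u:{0<..<c}|lborel. g u) + (LINT u:{c..<t}|lborel. g u)"
      by simp
    also have "(LINT u:{c..<t}|lborel. g u) = (LINT u:{c..t}|lborel. g u)"
    proof (rule set_integral_cong_set)
      have "continuous_on {c..t} g" "continuous_on {c..<t} g"
        using that cR by (auto intro: continuous_on_subset[OF g(1)])
      thus "set_borel_measurable lborel {c..t} g" "set_borel_measurable lborel {c..<t} g"
        by (auto dest!: set_measurable_continuous_on[rotated] simp: set_borel_measurable_def)
      show "AE x in lborel. (x \<in> {c..t}) = (x \<in> {c..<t})"
        using AE_lborel_singleton[of t] by eventually_elim auto
    qed
    also have "(LINT u:{c..t}|lborel. g u) = integral {c..t} g"
      using that cR by (intro set_borel_integral_eq_integral(2) borel_integrable_atLeastAtMost'
          continuous_on_subset[OF g(1)]) auto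
    finally show ?thesis .
  qed
  have "((\<lambda>x. integral {c..x} g) has_real_derivative g t0) (at t0 within {c..R})"
    by (rule integral_has_real_derivative) (use cR in \<open>auto intro: continuous_on_subset[OF g(1)]\<close>)
  moreover have "at t0 within {c..R} = at t0" using cR by (intro at_within_Icc_at) auto
  ultimately have "((\<lambda>x. (LINT u:{0<..<c}|lborel. g u) + integral {c..x} g) has_real_derivative g t0) (at t0)"
    by (auto intro!: derivative_eq_intros)
  thus ?thesis
    by (rule has_field_derivative_transform_within_open[of _ _ _ "{c<..<R}"]) (use cR split in auto)
qed

lemma isCont_set_integral_dominated:
  fixes K :: "real \<Rightarrow> real \<Rightarrow> real" and w :: "real \<Rightarrow> real"
  assumes cd: "c < t0" "t0 < d"
    and meas: "\<And>s. s \<in> {c..d} \<Longrightarrow> set_borel_measurable lborel A (K s)"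
    and w: "set_integrable lborel A w"
    and bound: "\<And>s v. s \<in> {c..d} \<Longrightarrow> v \<in> A \<Longrightarrow> \<bar>K s v\<bar> \<le> w v"
    and cont: "\<And>v. v \<in> A \<Longrightarrow> isCont (\<lambda>s. K s v) t0"
  shows "isCont (\<lambda>s. LINT v:A|lborel. K s v) t0"
  unfolding continuous_at_sequentially comp_def
proof (intro allI impI)
  fix X :: "nat \<Rightarrow> real" assume X: "X \<longlonglongrightarrow> t0"
  define Y where "Y n = max c (min d (X n))" for n
  have "(\<lambda>n. max c (min d (X n))) \<longlonglongrightarrow> max c (min d t0)"
    by (intro tendsto_intros X)
  hence Y: "Y \<longlonglongrightarrow> t0" using cd unfolding Y_def by simp
  have Yin: "Y n \<in> {c..d}" for n using cd by (auto simp: Y_def)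
  have "(\<lambda>n. \<integral>v. indicator A v *\<^sub>R K (Y n) v \<partial>lborel) \<longlonglongrightarrow> (\<integral>v. indicator A v *\<^sub>R K t0 v \<partial>lborel)"
  proof (rule integral_dominated_convergence[where w="\<lambda>v. indicator A v *\<^sub>R w v"])
    show "(\<lambda>v. indicator A v *\<^sub>R K t0 v) \<in> borel_measurable lborel"
      using meas[of t0] cd by (simp add: set_borel_measurable_def)
    show "(\<lambda>v. indicator A v *\<^sub>R K (Y n) v) \<in> borel_measurable lborel" for n
      using meas[OF Yin] by (simp add: set_borel_measurable_def)
    show "integrable lborel (\<lambda>v. indicator A v *\<^sub>R w v)"
      using w by (simp add: set_integrable_def)
    show "AE v in lborel. (\<lambda>n. indicator A v *\<^sub>R K (Y n) v) \<longlonglongrightarrow> indicator A v *\<^sub>R K t0 v"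
      using cont Y by (intro AE_I2) (auto intro: tendsto_mult_left isCont_tendsto_compose simp: indicator_def)
    show "AE v in lborel. norm (indicator A v *\<^sub>R K (Y n) v) \<le> indicator A v *\<^sub>R w v" for n
      using bound[OF Yin] by (intro AE_I2) (simp add: indicator_def)
  qed
  moreover have "eventually (\<lambda>n. Y n = X n) sequentially"
  proof -
    have "eventually (\<lambda>n. X n \<in> {c<..<d}) sequentially"
      using X cd by (intro topological_tendstoD) auto
    thus ?thesis by eventually_elim (auto simp: Y_def)
  qed
  ultimately show "(\<lambda>n. LINT v:A|lborel. K (X n) v) \<longlonglongrightarrow> (LINT v:A|lborel. K t0 v)"
    unfolding set_lebesgue_integral_def
    by (rule Lim_transform_eventually[OF _ eventually_mono]) auto
qed

lemma
  fixes \<alpha> u t :: real assumes \<alpha>: "0 < \<alpha>" "\<alpha> < 1" and ut: "u < t"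
  shows set_integrable_Abel_kernel:
      "set_integrable lborel {u<..<t} (\<lambda>s. 1 / (s - u) powr (1 - \<alpha>) / (t - s) powr \<alpha>)"
    and set_integral_Abel_kernel:
      "(LINT s:{u<..<t}|lborel. 1 / (s - u) powr (1 - \<alpha>) / (t - s) powr \<alpha>) = Gamma \<alpha> * Gamma (1 - \<alpha>)"
proof -
  let ?F = "\<lambda>s. 1 / (s - u) powr (1 - \<alpha>) / (t - s) powr \<alpha>"
  let ?G = "\<lambda>v. v powr (\<alpha> - 1) * (1 - v) powr ((1 - \<alpha>) - 1)"
  have d: "t - u > 0" using ut by simp
  have rescale: "?F (u + (t - u) * v) = (1 / (t - u)) * ?G v" if "v \<in> {0<..<1}" for v
  proof -
    have v: "v > 0" "1 - v > 0" using that by auto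
    have "?F (u + (t - u) * v) = 1 / ((t - u) * v) powr (1 - \<alpha>) / ((t - u) * (1 - v)) powr \<alpha>"
      by (simp add: algebra_simps)
    also have "\<dots> = 1 / ((t - u) powr (1 - \<alpha>) * (t - u) powr \<alpha>) * (1 / (v powr (1 - \<alpha>) * (1 - v) powr \<alpha>))"
      using d v by (simp add: powr_mult)
    also have "(t - u) powr (1 - \<alpha>) * (t - u) powr \<alpha> = t - u"
      using d by (simp add: powr_add[symmetric])
    also have "1 / (v powr (1 - \<alpha>) * (1 - v) powr \<alpha>) = ?G v"
      using v by (simp add: powr_minus_divide powr_diff divide_simps)
    finally show ?thesis .
  qed
  have G: "set_integrable lborel {0<..<1} ?G"
    using set_integrable_Beta[of \<alpha> "1 - \<alpha>"] \<alpha> by simp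
  have "set_integrable lborel {0<..<1} (\<lambda>v. ?F (u + (t - u) * v)) \<longleftrightarrow>
      set_integrable lborel {0<..<1} (\<lambda>v. (1 / (t - u)) * ?G v)"
    by (rule set_integrable_cong) (use rescale in auto)
  thus "set_integrable lborel {u<..<t} ?F"
    using set_integrable_Ioo_affine_iff[OF ut, of ?F] G by simp
  have "(LINT s:{u<..<t}|lborel. ?F s) = (t - u) * (LINT v:{0<..<1}|lborel. ?F (u + (t - u) * v))"
    by (rule set_integral_Ioo_affine[OF ut])
  also have "(LINT v:{0<..<1}|lborel. ?F (u + (t - u) * v)) = (LINT v:{0<..<1}|lborel. (1 / (t - u)) * ?G v)"
    by (rule set_lebesgue_integral_cong) (use rescale in auto)
  finally show "(LINT s:{u<..<t}|lborel. ?F s) = Gamma \<alpha> * Gamma (1 - \<alpha>)"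
    using set_integral_Beta[of \<alpha> "1 - \<alpha>"] \<alpha> d by (simp add: Beta_def)
qed

section \<open>Riemann--Liouville integrals\<close>

text \<open>\<open>RL_int \<alpha> g\<close> is \<open>\<Gamma>(\<alpha>)\<close> times the Riemann--Liouville integral of order \<open>\<alpha>\<close> of \<open>g\<close>.\<close>

definition RL_int :: "real \<Rightarrow> (real \<Rightarrow> real) \<Rightarrow> real \<Rightarrow> real" where
  "RL_int \<alpha> g s = (LINT u:{0<..<s}|lborel. g u / (s - u) powr (1 - \<alpha>))"

lemma RL_aux_int_eq_RL_int: "RL_aux_int \<alpha> f = RL_int (1 - \<alpha>) f"
  by (simp add: fun_eq_iff RL_aux_int_def RL_int_def)

text \<open>Abel's identity \<open>I\<^sup>1\<^sup>-\<^sup>\<alpha> I\<^sup>\<alpha> = I\<^sup>1\<close>, proved by Fubini and the Beta integral.\<close>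

lemma RL_int_complement:
  fixes g :: "real \<Rightarrow> real"
  assumes \<alpha>: "0 < \<alpha>" "\<alpha> < 1" and t: "t > 0"
    and g: "continuous_on {0<..} g" "set_integrable lborel {0<..<t} g"
  shows "RL_int (1 - \<alpha>) (RL_int \<alpha> g) t = Gamma \<alpha> * Gamma (1 - \<alpha>) * (LINT u:{0<..<t}|lborel. g u)"
proof -
  define K where "K = Gamma \<alpha> * Gamma (1 - \<alpha>)"
  define g0 where "g0 u = indicator {0<..} u * g u" for u
  have g0_meas[measurable]: "g0 \<in> borel_measurable borel"
    unfolding g0_def using borel_measurable_continuous_on_indicator[OF _ g(1)] by simp
  define H where "H u s = of_bool (0 < u \<and> u < s \<and> s < t) * g0 u / (s - u) powr (1 - \<alpha>) / (t - s) powr \<alpha>"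
    for u s
  have H_meas: "case_prod H \<in> borel_measurable (lborel \<Otimes>\<^sub>M lborel)"
    unfolding H_def by measurable
  define P where "P u s = indicator {u<..<t} s * (1 / (s - u) powr (1 - \<alpha>) / (t - s) powr \<alpha>)" for u s
  have H_eq: "H u s = indicator {0<..<t} u * g u * P u s" for u s
    by (auto simp: H_def g0_def P_def indicator_def)
  have inner: "integrable lborel (H u) \<and> (\<integral>s. H u s \<partial>lborel) = indicator {0<..<t} u * g u * K
      \<and> (\<integral>s. norm (H u s) \<partial>lborel) = indicator {0<..<t} u * \<bar>g u\<bar> * K" for u
  proof (cases "0 < u \<and> u < t")
    case True
    have "integrable lborel (P u)" "(\<integral>s. P u s \<partial>lborel) = K"
      using set_integrable_Abel_kernel[OF \<alpha>, of u t] set_integral_Abel_kernel[OF \<alpha>, of u t] True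
      by (auto simp: K_def P_def[abs_def] set_integrable_def set_lebesgue_integral_def)
    moreover have "\<bar>P u s\<bar> = P u s" for s by (simp add: P_def indicator_def)
    moreover have "H u = (\<lambda>s. (indicator {0<..<t} u * g u) * P u s)" by (simp add: fun_eq_iff H_eq)
    ultimately show ?thesis using True by (simp add: indicator_def abs_mult)
  next
    case False
    hence "H u = (\<lambda>s. 0)" by (auto simp: H_eq indicator_def fun_eq_iff)
    thus ?thesis using False by (simp add: indicator_def)
  qed
  have "integrable (lborel \<Otimes>\<^sub>M lborel) (case_prod H)"
  proof (rule lborel_pair.Fubini_integrable[OF H_meas])
    show "integrable lborel (\<lambda>u. \<integral>s. norm (case_prod H (u, s)) \<partial>lborel)"
      using inner set_integrable_abs[OF g(2)] unfolding set_integrable_def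
      by (simp add: integrable_mult_left)
    show "AE u in lborel. integrable lborel (\<lambda>s. case_prod H (u, s))"
      using inner by simp
  qed
  hence Fubini: "(\<integral>s. (\<integral>u. H u s \<partial>lborel) \<partial>lborel) = (\<integral>u. (\<integral>s. H u s \<partial>lborel) \<partial>lborel)"
    by (rule lborel_pair.Fubini_integral)
  have inner_s: "(\<integral>u. H u s \<partial>lborel) = indicator {0<..<t} s * (RL_int \<alpha> g s / (t - s) powr \<alpha>)" for s
  proof (cases "0 < s \<and> s < t")
    case True
    have "(\<lambda>u. H u s) = (\<lambda>u. (indicator {0<..<s} u * (g u / (s - u) powr (1 - \<alpha>))) / (t - s) powr \<alpha>)"
      using True by (auto simp: H_def g0_def indicator_def fun_eq_iff)
    hence "(\<integral>u. H u s \<partial>lborel) =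
        (\<integral>u. indicator {0<..<s} u * (g u / (s - u) powr (1 - \<alpha>)) \<partial>lborel) / (t - s) powr \<alpha>"
      by (simp only: integral_divide_zero)
    thus ?thesis using True by (simp add: RL_int_def set_lebesgue_integral_def indicator_def)
  next
    case False
    hence "H u s = 0" for u by (auto simp: H_def)
    thus ?thesis using False by (simp add: indicator_def)
  qed
  have "RL_int (1 - \<alpha>) (RL_int \<alpha> g) t = (\<integral>s. (\<integral>u. H u s \<partial>lborel) \<partial>lborel)"
    unfolding inner_s RL_int_def[of "1 - \<alpha>" "RL_int \<alpha> g"] set_lebesgue_integral_def by simp
  also have "\<dots> = K * (LINT u:{0<..<t}|lborel. g u)"
    using inner by (simp add: Fubini set_lebesgue_integral_def mult_ac)
  finally show ?thesis by (simp add: K_def)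
qed

definition powr_singular :: "real \<Rightarrow> (real \<Rightarrow> real) \<Rightarrow> bool" where
  "powr_singular \<alpha> g \<longleftrightarrow> continuous_on {0<..} g \<and>
     (\<forall>d>0. \<exists>P\<ge>0. \<exists>Q\<ge>0. \<forall>u\<in>{0<..d}. \<bar>g u\<bar> \<le> P + Q * u powr (\<alpha> - 1))"

lemma powr_singular_set_integrable:
  assumes \<alpha>: "0 < \<alpha>" and g: "powr_singular \<alpha> g" and t: "t > 0"
  shows "set_integrable lborel {0<..<t} g"
proof -
  obtain P Q where PQ: "\<forall>u\<in>{0<..t}. \<bar>g u\<bar> \<le> P + Q * u powr (\<alpha> - 1)"
    using g t unfolding powr_singular_def by blast
  have "set_integrable lborel {0<..<t} (\<lambda>u. P)"
    by (rule set_integrable_subset[OF borel_integrable_atLeastAtMost'[of 0 t]]) auto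
  moreover have "set_integrable lborel {0<..<t} (\<lambda>u. Q * u powr (\<alpha> - 1))"
    using \<alpha> t by (intro set_integrable_mult_right set_integrable_powr_at_0) auto
  ultimately have dom: "set_integrable lborel {0<..<t} (\<lambda>u. P + Q * u powr (\<alpha> - 1))"
    by (rule set_integral_add(1))
  have "continuous_on {0<..<t} g"
    by (rule continuous_on_subset[of "{0<..}"]) (use g in \<open>auto simp: powr_singular_def\<close>)
  from set_integrable_continuous_dominated[OF _ this dom] PQ show ?thesis by auto
qed

lemma RL_int_rescale:
  assumes s: "s > 0"
  shows "RL_int \<alpha> g s = s powr \<alpha> * (LINT v:{0<..<1}|lborel. g (s * v) * (1 - v) powr (\<alpha> - 1))"
proof -
  have pointwise: "g (s * v) / (s - s * v) powr (1 - \<alpha>) =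
      s powr (\<alpha> - 1) * (g (s * v) * (1 - v) powr (\<alpha> - 1))" if "v \<in> {0<..<1}" for v
  proof -
    have "(s - s * v) powr (1 - \<alpha>) = s powr (1 - \<alpha>) * (1 - v) powr (1 - \<alpha>)"
      using that s by (simp add: powr_mult[symmetric] right_diff_distrib)
    thus ?thesis by (simp add: powr_minus_one_minus)
  qed
  have "RL_int \<alpha> g s = s * (LINT v:{0<..<1}|lborel. g (s * v) / (s - s * v) powr (1 - \<alpha>))"
    unfolding RL_int_def using set_integral_Ioo_affine[of 0 s] s by simp
  also have "\<dots> = s * (LINT v:{0<..<1}|lborel. s powr (\<alpha> - 1) * (g (s * v) * (1 - v) powr (\<alpha> - 1)))"
    using pointwise by (subst set_lebesgue_integral_cong) auto
  also have "\<dots> = (s * s powr (\<alpha> - 1)) * (LINT v:{0<..<1}|lborel. g (s * v) * (1 - v) powr (\<alpha> - 1))"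
    by (simp only: set_integral_mult_right mult.assoc)
  also have "s * s powr (\<alpha> - 1) = s powr \<alpha>"
    using s by (simp add: powr_mult_base)
  finally show ?thesis .
qed

lemma rescaled_integrand_continuous_on:
  fixes g :: "real \<Rightarrow> real" and s :: real
  assumes g: "continuous_on {0<..} g" and s: "s > 0"
  shows "continuous_on {0<..<1} (\<lambda>v. g (s * v) * (1 - v) powr (\<alpha> - 1))"
proof -
  have "continuous_on {0<..<1} (\<lambda>v. g (s * v))"
    by (rule continuous_on_compose2[OF g continuous_on_mult_left[OF continuous_on_id]])
      (use s in \<open>auto intro: mult_pos_pos\<close>)
  thus ?thesis by (intro continuous_intros) auto
qed

lemma rescaled_integrand_bound:
  fixes g :: "real \<Rightarrow> real" and s v c d :: real
  assumes \<alpha>: "\<alpha> < 1" and g: "\<forall>u\<in>{0<..d}. \<bar>g u\<bar> \<le> P + Q * u powr (\<alpha> - 1)" and Q: "Q \<ge> 0"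
    and s: "0 < c" "c \<le> s" "s \<le> d" and v: "0 < v" "v < 1"
  shows "\<bar>g (s * v) * (1 - v) powr (\<alpha> - 1)\<bar> \<le>
    P * (1 - v) powr (\<alpha> - 1) + Q * c powr (\<alpha> - 1) * (v powr (\<alpha> - 1) * (1 - v) powr (\<alpha> - 1))"
proof -
  have "s > 0" using s by linarith
  hence "s * v \<in> {0<..d}" using v s by (auto simp: mult_le_cancel_left1 intro: order.trans[of _ s])
  hence "\<bar>g (s * v)\<bar> \<le> P + Q * (s * v) powr (\<alpha> - 1)" using g by blast
  also have "(s * v) powr (\<alpha> - 1) \<le> (c * v) powr (\<alpha> - 1)"
    using \<alpha> s v by (intro powr_mono2') auto
  hence "Q * (s * v) powr (\<alpha> - 1) \<le> Q * c powr (\<alpha> - 1) * v powr (\<alpha> - 1)"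
    using Q s v by (simp add: powr_mult mult_left_mono mult.assoc)
  finally have "\<bar>g (s * v)\<bar> * (1 - v) powr (\<alpha> - 1) \<le>
      (P + Q * c powr (\<alpha> - 1) * v powr (\<alpha> - 1)) * (1 - v) powr (\<alpha> - 1)"
    by (simp add: mult_right_mono)
  thus ?thesis by (simp add: abs_mult algebra_simps)
qed

lemma RL_int_continuous_on:
  assumes \<alpha>: "0 < \<alpha>" "\<alpha> < 1" and g: "powr_singular \<alpha> g"
  shows "continuous_on {0<..} (RL_int \<alpha> g)"
proof (intro continuous_at_imp_continuous_on ballI)
  fix t0 :: real assume "t0 \<in> {0<..}"
  define c d where "c = t0 / 2" and "d = 2 * t0"
  have cd: "0 < c" "c < t0" "t0 < d" using \<open>t0 \<in> {0<..}\<close> by (auto simp: c_def d_def)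
  have gc: "continuous_on {0<..} g" using g by (simp add: powr_singular_def)
  obtain P Q where PQ: "Q \<ge> 0" "\<forall>u\<in>{0<..d}. \<bar>g u\<bar> \<le> P + Q * u powr (\<alpha> - 1)"
    using g cd unfolding powr_singular_def by (meson order.strict_trans)
  have "isCont (\<lambda>s. LINT v:{0<..<1}|lborel. g (s * v) * (1 - v) powr (\<alpha> - 1)) t0"
  proof (rule isCont_set_integral_dominated[OF cd(2,3)])
    show "set_borel_measurable lborel {0<..<1} (\<lambda>v. g (s * v) * (1 - v) powr (\<alpha> - 1))"
      if "s \<in> {c..d}" for s
      using set_measurable_continuous_on[OF _ rescaled_integrand_continuous_on[OF gc]] that cd
      by (simp add: set_borel_measurable_def)
    show "set_integrable lborel {0<..<1}
        (\<lambda>v. P * (1 - v) powr (\<alpha> - 1) + Q * c powr (\<alpha> - 1) * (v powr (\<alpha> - 1) * (1 - v) powr (\<alpha> - 1)))"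
      using set_integrable_one_minus_powr[OF \<alpha>(1)] set_integrable_Beta[of \<alpha> \<alpha>] \<alpha>
      by (intro set_integral_add set_integrable_mult_right) auto
    show "\<bar>g (s * v) * (1 - v) powr (\<alpha> - 1)\<bar> \<le>
        P * (1 - v) powr (\<alpha> - 1) + Q * c powr (\<alpha> - 1) * (v powr (\<alpha> - 1) * (1 - v) powr (\<alpha> - 1))"
      if "s \<in> {c..d}" "v \<in> {0<..<1}" for s v
      using that cd by (intro rescaled_integrand_bound[OF \<alpha>(2) PQ(2,1)]) auto
    show "isCont (\<lambda>s. g (s * v) * (1 - v) powr (\<alpha> - 1)) t0" if "v \<in> {0<..<1}" for v
    proof -
      have "isCont g (t0 * v)"
        using gc that cd continuous_on_eq_continuous_at[of "{0<..}" g] by auto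
      moreover have "isCont (\<lambda>s. s * v) t0" by (intro continuous_intros)
      ultimately have "isCont (\<lambda>s. g (s * v)) t0" using isCont_o2 by blast
      thus ?thesis by (intro continuous_intros)
    qed
  qed
  hence "isCont (\<lambda>s. s powr \<alpha> * (LINT v:{0<..<1}|lborel. g (s * v) * (1 - v) powr (\<alpha> - 1))) t0"
    using cd by (intro continuous_intros) auto
  moreover have ev: "eventually (\<lambda>s. s powr \<alpha> * (LINT v:{0<..<1}|lborel. g (s * v) * (1 - v) powr (\<alpha> - 1))
      = RL_int \<alpha> g s) (nhds t0)"
    using eventually_nhds_in_open[of "{0<..}" t0] cd
    by (auto elim!: eventually_mono simp: RL_int_rescale)
  ultimately show "isCont (RL_int \<alpha> g) t0" using isCont_cong[OF ev] by simp
qed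

lemma RL_int_tendsto_zero:
  assumes \<alpha>: "0 < \<alpha>" "\<alpha> < 1" and g: "powr_singular \<alpha> g"
  shows "((\<lambda>t. t powr (1 - \<alpha>) * RL_int \<alpha> g t) \<longlongrightarrow> 0) (at_right 0)"
proof -
  obtain P Q where PQ: "Q \<ge> 0" "\<forall>u\<in>{0<..1}. \<bar>g u\<bar> \<le> P + Q * u powr (\<alpha> - 1)"
    using g unfolding powr_singular_def by (meson zero_less_one)
  have gc: "continuous_on {0<..} g" using g by (simp add: powr_singular_def)
  define C1 C2 where "C1 = (LINT v:{0<..<1}|lborel. (1 - v) powr (\<alpha> - 1))"
    and "C2 = (LINT v:{0<..<1}|lborel. v powr (\<alpha> - 1) * (1 - v) powr (\<alpha> - 1))"
  have "\<forall>\<^sub>F t in at_right (0::real). t \<in> {0<..<1}"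
    by (rule eventually_at_right_real) simp
  hence bound: "\<forall>\<^sub>F t in at_right 0. norm (t powr (1 - \<alpha>) * RL_int \<alpha> g t) \<le> P * C1 * t + Q * C2 * t powr \<alpha>"
  proof eventually_elim
    case (elim t)
    hence t: "0 < t" "t < 1" by auto
    have I1: "set_integrable lborel {0<..<1} (\<lambda>v. (1 - v) powr (\<alpha> - 1))"
      and I2: "set_integrable lborel {0<..<1} (\<lambda>v. v powr (\<alpha> - 1) * (1 - v) powr (\<alpha> - 1))"
      using set_integrable_one_minus_powr[OF \<alpha>(1)] set_integrable_Beta[of \<alpha> \<alpha>] \<alpha> by auto
    have "\<bar>LINT v:{0<..<1}|lborel. g (t * v) * (1 - v) powr (\<alpha> - 1)\<bar> \<le>
        (LINT v:{0<..<1}|lborel. P * (1 - v) powr (\<alpha> - 1) +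
          Q * t powr (\<alpha> - 1) * (v powr (\<alpha> - 1) * (1 - v) powr (\<alpha> - 1)))"
      using t by (intro set_integral_abs_le_dominated rescaled_integrand_continuous_on[OF gc]
          set_integral_add set_integrable_mult_right I1 I2 rescaled_integrand_bound[OF \<alpha>(2) PQ(2,1)]) auto
    also have "\<dots> = P * C1 + Q * t powr (\<alpha> - 1) * C2"
      using I1 I2 by (simp add: C1_def C2_def set_integral_add set_integrable_mult_right)
    finally have integral_bound: "\<bar>LINT v:{0<..<1}|lborel. g (t * v) * (1 - v) powr (\<alpha> - 1)\<bar> \<le>
        P * C1 + Q * t powr (\<alpha> - 1) * C2" .
    have "norm (t powr (1 - \<alpha>) * RL_int \<alpha> g t) =
        t * \<bar>LINT v:{0<..<1}|lborel. g (t * v) * (1 - v) powr (\<alpha> - 1)\<bar>"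
      using t by (simp add: RL_int_rescale abs_mult mult.assoc[symmetric] powr_add[symmetric])
    also have "\<dots> \<le> t * (P * C1 + Q * t powr (\<alpha> - 1) * C2)"
      using integral_bound t by (intro mult_left_mono) auto
    also have "\<dots> = P * C1 * t + Q * C2 * t powr \<alpha>"
      using t by (simp add: algebra_simps powr_mult_base)
    finally show ?case .
  qed
  have "((\<lambda>t::real. t powr \<alpha>) \<longlongrightarrow> 0) (at_right 0)"
    by (rule tendsto_zero_powrI) (use \<alpha> in \<open>auto intro!: tendsto_intros eventually_at_rightI[of 0 1]\<close>)
  hence "((\<lambda>t. P * C1 * t + Q * C2 * t powr \<alpha>) \<longlongrightarrow> P * C1 * 0 + Q * C2 * 0) (at_right 0)"
    by (intro tendsto_intros)
  thus ?thesis by (intro Lim_null_comparison[OF bound]) simp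
qed

lemma RL_int_cong:
  assumes "\<And>s. 0 < s \<Longrightarrow> s < t \<Longrightarrow> f s = h s"
  shows "RL_int \<alpha> f t = RL_int \<alpha> h t"
  unfolding RL_int_def using assms by (intro set_lebesgue_integral_cong) auto

lemma RL_int_cmult: "RL_int \<alpha> (\<lambda>s. C * f s) t = C * RL_int \<alpha> f t"
  unfolding RL_int_def by (simp add: set_integral_mult_right[symmetric] mult.assoc)

lemma RL_int_diff:
  assumes "set_integrable lborel {0<..<s} (\<lambda>u. f u / (s - u) powr (1 - \<alpha>))"
    and "set_integrable lborel {0<..<s} (\<lambda>u. h u / (s - u) powr (1 - \<alpha>))"
  shows "RL_int \<alpha> (\<lambda>u. f u - h u) s = RL_int \<alpha> f s - RL_int \<alpha> h s"
  unfolding RL_int_def diff_divide_distrib by (rule set_integral_diff(2)[OF assms])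

lemma RL_admissible_RL_int:
  assumes \<alpha>: "0 < \<alpha>" "\<alpha> < 1" and g: "powr_singular \<alpha> g"
    and f: "\<And>s. s > 0 \<Longrightarrow> f s = C * RL_int \<alpha> g s"
  shows "RL_admissible \<alpha> f"
  unfolding RL_admissible_def
proof (intro conjI exI)
  show "continuous_on {0<..} f"
    using f by (intro continuous_on_eq[OF continuous_on_mult_left[OF RL_int_continuous_on[OF \<alpha> g]]]) auto
  have "((\<lambda>t. C * (t powr (1 - \<alpha>) * RL_int \<alpha> g t)) \<longlongrightarrow> C * 0) (at_right 0)"
    by (intro tendsto_intros RL_int_tendsto_zero[OF \<alpha> g])
  moreover have "\<forall>\<^sub>F t in at_right 0. C * (t powr (1 - \<alpha>) * RL_int \<alpha> g t) = t powr (1 - \<alpha>) * f t"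
    using eventually_at_right_less[of 0] by eventually_elim (simp add: f)
  ultimately show "((\<lambda>t. t powr (1 - \<alpha>) * f t) \<longlongrightarrow> 0) (at_right 0)"
    by (simp add: Lim_transform_eventually)
qed

lemma has_RL_derivative_RL_int:
  assumes \<alpha>: "0 < \<alpha>" "\<alpha> < 1" and g: "powr_singular \<alpha> g"
    and f: "\<And>s. s > 0 \<Longrightarrow> f s = C * RL_int \<alpha> g s" and t: "t > 0"
  shows "has_RL_derivative_at \<alpha> f (C * Gamma \<alpha> * g t) t"
proof -
  have gc: "continuous_on {0<..} g" using g by (simp add: powr_singular_def)
  have gi: "set_integrable lborel {0<..<\<tau>} g" if "\<tau> > 0" for \<tau>
    by (rule powr_singular_set_integrable[OF \<alpha>(1) g that])
  have aux: "RL_aux_int \<alpha> f \<tau> = C * Gamma \<alpha> * Gamma (1 - \<alpha>) * (LINT u:{0<..<\<tau>}|lborel. g u)"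
    if "\<tau> > 0" for \<tau>
  proof -
    have "RL_aux_int \<alpha> f \<tau> = RL_int (1 - \<alpha>) (\<lambda>s. C * RL_int \<alpha> g s) \<tau>"
      unfolding RL_aux_int_eq_RL_int by (rule RL_int_cong) (simp add: f)
    thus ?thesis
      using RL_int_complement[OF \<alpha> that gc gi[OF that]] by (simp add: RL_int_cmult)
  qed
  have "((\<lambda>\<tau>. C * Gamma \<alpha> * Gamma (1 - \<alpha>) * (LINT u:{0<..<\<tau>}|lborel. g u))
      has_real_derivative C * Gamma \<alpha> * Gamma (1 - \<alpha>) * g t) (at t)"
    by (intro DERIV_cmult has_real_derivative_set_integral_Ioo[OF gc gi t])
  hence "(RL_aux_int \<alpha> f has_real_derivative C * Gamma \<alpha> * Gamma (1 - \<alpha>) * g t) (at t)"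
    by (rule has_field_derivative_transform_within_open[of _ _ _ "{0<..}"]) (use t aux in auto)
  moreover have "Gamma (1 - \<alpha>) \<noteq> 0" using \<alpha> by (simp add: Gamma_real_pos less_imp_neq[symmetric])
  ultimately show ?thesis
    unfolding has_RL_derivative_at_def by (intro exI[of _ "C * Gamma \<alpha> * Gamma (1 - \<alpha>) * g t"]) auto
qed

section \<open>The fixed point problem\<close>

lemma le_SUP_powr_scaled:
  fixes I :: "real \<Rightarrow> real"
  assumes "bdd_above ((\<lambda>t. t powr (1 - \<alpha>) * I t) ` {0<..})" and t: "t > 0"
  shows "I t \<le> (SUP t\<in>{0<..}. t powr (1 - \<alpha>) * I t) * t powr (\<alpha> - 1)"
proof -
  have "t powr (1 - \<alpha>) * I t \<le> (SUP t\<in>{0<..}. t powr (1 - \<alpha>) * I t)"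
    using assms by (intro cSUP_upper) auto
  hence "t powr (\<alpha> - 1) * (t powr (1 - \<alpha>) * I t) \<le> t powr (\<alpha> - 1) * (SUP t\<in>{0<..}. t powr (1 - \<alpha>) * I t)"
    by (rule mult_left_mono) simp
  moreover have "t powr (\<alpha> - 1) * t powr (1 - \<alpha>) = 1" using t by (simp add: powr_add[symmetric])
  ultimately show ?thesis by (simp add: algebra_simps)
qed

locale RL_coefficient =
  fixes \<alpha> :: real and a :: "real \<Rightarrow> real"
  assumes alpha: "0 < \<alpha>" "\<alpha> < 1"
    and a_cont: "continuous_on {0..} a"
    and integrable_lin: "\<And>t. t > 0 \<Longrightarrow>
        set_integrable lborel {0<..<t} (\<lambda>s. s * \<bar>a s\<bar> / (t - s) powr (1 - \<alpha>))"
    and bdd_lin: "bdd_above ((\<lambda>t. t powr (1 - \<alpha>) *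
        (LINT s:{0<..<t}|lborel. s * \<bar>a s\<bar> / (t - s) powr (1 - \<alpha>))) ` {0<..})"
    and integrable_sing: "\<And>t. t > 0 \<Longrightarrow>
        set_integrable lborel {0<..<t} (\<lambda>s. \<bar>a s\<bar> / ((t - s) powr (1 - \<alpha>) * s powr (1 - \<alpha>)))"
    and bdd_sing: "bdd_above ((\<lambda>t. t powr (1 - \<alpha>) *
        (LINT s:{0<..<t}|lborel. \<bar>a s\<bar> / ((t - s) powr (1 - \<alpha>) * s powr (1 - \<alpha>)))) ` {0<..})"
begin

definition kappa :: real where
  "kappa = (SUP t\<in>{0<..}. t powr (1 - \<alpha>) *
     (LINT s:{0<..<t}|lborel. s * \<bar>a s\<bar> / (t - s) powr (1 - \<alpha>)))"

definition chi :: real where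
  "chi = (SUP t\<in>{0<..}. t powr (1 - \<alpha>) *
     (LINT s:{0<..<t}|lborel. \<bar>a s\<bar> / ((t - s) powr (1 - \<alpha>) * s powr (1 - \<alpha>))))"

lemma chi_nonneg: "chi \<ge> 0"
proof -
  have "(LINT s:{0<..<1}|lborel. \<bar>a s\<bar> / ((1 - s) powr (1 - \<alpha>) * s powr (1 - \<alpha>))) \<ge> 0"
    unfolding set_lebesgue_integral_def
    by (intro Bochner_Integration.integral_nonneg) (auto simp: indicator_def)
  also have "\<dots> \<le> chi"
    unfolding chi_def using cSUP_upper[OF _ bdd_sing, of 1] by simp
  finally show ?thesis .
qed

lemma a_continuous_on_pos: "continuous_on {0<..} a"
  by (rule continuous_on_subset[OF a_cont]) auto

definition growth_bounded :: "real \<Rightarrow> real \<Rightarrow> (real \<Rightarrow> real) \<Rightarrow> bool" where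
  "growth_bounded B M y \<longleftrightarrow> continuous_on {0<..} y \<and> B \<ge> 0 \<and> M \<ge> 0 \<and>
     (\<forall>t>0. \<bar>y t\<bar> \<le> B * t + M * t powr (\<alpha> - 1))"

lemma powr_singular_a_mult:
  assumes y: "growth_bounded B M y"
  shows "powr_singular \<alpha> (\<lambda>u. a u * y u)"
  unfolding powr_singular_def
proof (intro conjI allI impI)
  show "continuous_on {0<..} (\<lambda>u. a u * y u)"
    using y a_continuous_on_pos by (auto intro!: continuous_intros simp: growth_bounded_def)
  fix d :: real assume "d > 0"
  have "compact (a ` {0..d})"
    by (rule compact_continuous_image[OF continuous_on_subset[OF a_cont] compact_Icc]) auto
  then obtain A where A: "\<forall>u\<in>{0..d}. \<bar>a u\<bar> \<le> A"
    by (auto dest!: compact_imp_bounded simp: bounded_iff)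
  hence A0: "A \<ge> 0" using \<open>d > 0\<close> by force
  have "\<bar>a u * y u\<bar> \<le> A * B * d + A * M * u powr (\<alpha> - 1)" if u: "u \<in> {0<..d}" for u
  proof -
    have "\<bar>y u\<bar> \<le> B * d + M * u powr (\<alpha> - 1)"
      using y u mult_left_mono[of u d B] unfolding growth_bounded_def by force
    hence "\<bar>a u\<bar> * \<bar>y u\<bar> \<le> A * (B * d + M * u powr (\<alpha> - 1))"
      using A A0 u by (intro mult_mono) auto
    thus ?thesis by (simp add: abs_mult algebra_simps)
  qed
  moreover have "A * B * d \<ge> 0" "A * M \<ge> 0"
    using A0 y \<open>d > 0\<close> by (auto simp: growth_bounded_def)
  ultimately show "\<exists>P\<ge>0. \<exists>Q\<ge>0. \<forall>u\<in>{0<..d}. \<bar>a u * y u\<bar> \<le> P + Q * u powr (\<alpha> - 1)"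
    by blast
qed

lemma
  assumes y: "growth_bounded B M y" and s: "s > 0"
  shows set_integrable_RL_integrand:
      "set_integrable lborel {0<..<s} (\<lambda>u. a u * y u / (s - u) powr (1 - \<alpha>))"
    and RL_int_a_mult_bound:
      "\<bar>RL_int \<alpha> (\<lambda>u. a u * y u) s\<bar> \<le> (B * kappa + M * chi) * s powr (\<alpha> - 1)"
proof -
  let ?lin = "\<lambda>u. u * \<bar>a u\<bar> / (s - u) powr (1 - \<alpha>)"
  let ?sing = "\<lambda>u. \<bar>a u\<bar> / ((s - u) powr (1 - \<alpha>) * u powr (1 - \<alpha>))"
  have lin: "set_integrable lborel {0<..<s} (\<lambda>u. B * ?lin u)"
    and sing: "set_integrable lborel {0<..<s} (\<lambda>u. M * ?sing u)"
    by (rule set_integrable_mult_right[OF integrable_lin[OF s]],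
        rule set_integrable_mult_right[OF integrable_sing[OF s]])
  have "continuous_on {0<..<s} (\<lambda>u. a u * y u)"
    by (rule continuous_on_subset[of "{0<..}"])
      (use powr_singular_a_mult[OF y] in \<open>auto simp: powr_singular_def\<close>)
  hence cont: "continuous_on {0<..<s} (\<lambda>u. a u * y u / (s - u) powr (1 - \<alpha>))"
    by (rule continuous_on_divide) (auto intro!: continuous_intros)
  have bound: "\<bar>a u * y u / (s - u) powr (1 - \<alpha>)\<bar> \<le> B * ?lin u + M * ?sing u" if u: "u \<in> {0<..<s}" for u
  proof -
    have "\<bar>y u\<bar> \<le> B * u + M * u powr (\<alpha> - 1)" using y u by (auto simp: growth_bounded_def)
    hence "\<bar>a u\<bar> * \<bar>y u\<bar> / (s - u) powr (1 - \<alpha>) \<le>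
        \<bar>a u\<bar> * (B * u + M * u powr (\<alpha> - 1)) / (s - u) powr (1 - \<alpha>)"
      using u by (intro divide_right_mono mult_left_mono) auto
    thus ?thesis using u by (simp add: abs_mult powr_minus_one_minus field_simps)
  qed
  show "set_integrable lborel {0<..<s} (\<lambda>u. a u * y u / (s - u) powr (1 - \<alpha>))"
    using set_integrable_continuous_dominated[OF _ cont set_integral_add(1)[OF lin sing]] bound by auto
  have "\<bar>RL_int \<alpha> (\<lambda>u. a u * y u) s\<bar> \<le> (LINT u:{0<..<s}|lborel. B * ?lin u + M * ?sing u)"
    unfolding RL_int_def
    using set_integral_abs_le_dominated[OF _ cont set_integral_add(1)[OF lin sing]] bound by auto
  also have "\<dots> = B * (LINT u:{0<..<s}|lborel. ?lin u) + M * (LINT u:{0<..<s}|lborel. ?sing u)"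
    unfolding set_integral_add(2)[OF lin sing] by (simp only: set_integral_mult_right)
  also have "\<dots> \<le> B * (kappa * s powr (\<alpha> - 1)) + M * (chi * s powr (\<alpha> - 1))"
    using y le_SUP_powr_scaled[OF bdd_lin s] le_SUP_powr_scaled[OF bdd_sing s]
    unfolding kappa_def chi_def growth_bounded_def by (intro add_mono mult_left_mono) auto
  finally show "\<bar>RL_int \<alpha> (\<lambda>u. a u * y u) s\<bar> \<le> (B * kappa + M * chi) * s powr (\<alpha> - 1)"
    by (simp add: algebra_simps)
qed

lemma Gamma_alpha_pos: "Gamma \<alpha> > 0"
  using alpha by (simp add: Gamma_real_pos)

definition tail_int :: "(real \<Rightarrow> real) \<Rightarrow> real \<Rightarrow> real" where
  "tail_int y t = (LINT s:{t..}|lborel. RL_int \<alpha> (\<lambda>u. a u * y u) s / s\<^sup>2)"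

lemma
  assumes y: "growth_bounded B M y" and t: "t > 0"
  shows set_integrable_tail_int:
      "set_integrable lborel {t..} (\<lambda>s. RL_int \<alpha> (\<lambda>u. a u * y u) s / s\<^sup>2)"
    and tail_int_bound: "\<bar>tail_int y t\<bar> \<le> (B * kappa + M * chi) * t powr (\<alpha> - 2) / (2 - \<alpha>)"
proof -
  define C where "C = B * kappa + M * chi"
  have dom: "set_integrable lborel {t..} (\<lambda>s. C * s powr (\<alpha> - 3))"
    using set_integrable_powr_at_top[OF _ t, of "\<alpha> - 3"] alpha by (intro set_integrable_mult_right) auto
  have "continuous_on {0<..} (RL_int \<alpha> (\<lambda>u. a u * y u))"
    by (rule RL_int_continuous_on[OF alpha powr_singular_a_mult[OF y]])
  hence cont: "continuous_on {t..} (\<lambda>s. RL_int \<alpha> (\<lambda>u. a u * y u) s / s\<^sup>2)"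
    using t by (auto intro!: continuous_intros elim: continuous_on_subset)
  have bound: "\<bar>RL_int \<alpha> (\<lambda>u. a u * y u) s / s\<^sup>2\<bar> \<le> C * s powr (\<alpha> - 3)" if "s \<in> {t..}" for s
  proof -
    have s: "s > 0" using that t by simp
    have "\<bar>RL_int \<alpha> (\<lambda>u. a u * y u) s / s\<^sup>2\<bar> \<le> C * (s powr (\<alpha> - 1) / s\<^sup>2)"
      using RL_int_a_mult_bound[OF y s] by (simp add: abs_div C_def divide_right_mono)
    also have "s powr (\<alpha> - 1) / s\<^sup>2 = s powr (\<alpha> - 3)"
      using s powr_diff[of s "\<alpha> - 1" 2] by (simp add: powr_numeral)
    finally show ?thesis by simp
  qed
  show "set_integrable lborel {t..} (\<lambda>s. RL_int \<alpha> (\<lambda>u. a u * y u) s / s\<^sup>2)"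
    using set_integrable_continuous_dominated[OF _ cont dom] bound by auto
  have "\<bar>tail_int y t\<bar> \<le> (LINT s:{t..}|lborel. C * s powr (\<alpha> - 3))"
    unfolding tail_int_def using set_integral_abs_le_dominated[OF _ cont dom] bound by auto
  also have "\<dots> = C * t powr (\<alpha> - 2) / (2 - \<alpha>)"
    using set_integral_powr_at_top[OF _ t, of "\<alpha> - 3"] alpha
    by (simp add: set_integral_mult_right divide_simps) (simp add: algebra_simps)
  finally show "\<bar>tail_int y t\<bar> \<le> (B * kappa + M * chi) * t powr (\<alpha> - 2) / (2 - \<alpha>)"
    by (simp add: C_def)
qed

lemma has_real_derivative_tail_int:
  assumes y: "growth_bounded B M y" and t: "t > 0"
  shows "(tail_int y has_real_derivative - (RL_int \<alpha> (\<lambda>u. a u * y u) t / t\<^sup>2)) (at t)"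
  unfolding tail_int_def
proof (rule has_real_derivative_set_integral_atLeast[OF _ set_integrable_tail_int[OF y] t])
  show "continuous_on {0<..} (\<lambda>s. RL_int \<alpha> (\<lambda>u. a u * y u) s / s\<^sup>2)"
    using RL_int_continuous_on[OF alpha powr_singular_a_mult[OF y]] by (auto intro!: continuous_intros)
qed

lemma tail_int_continuous_on:
  assumes "growth_bounded B M y"
  shows "continuous_on {0<..} (tail_int y)"
  using has_real_derivative_tail_int[OF assms]
  by (intro continuous_at_imp_continuous_on ballI DERIV_isCont) auto

lemma tail_int_diff:
  assumes y1: "growth_bounded B1 M1 y1" and y2: "growth_bounded B2 M2 y2" and t: "t > 0"
  shows "tail_int (\<lambda>u. y1 u - y2 u) t = tail_int y1 t - tail_int y2 t"
proof -
  have "RL_int \<alpha> (\<lambda>u. a u * (y1 u - y2 u)) s =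
      RL_int \<alpha> (\<lambda>u. a u * y1 u) s - RL_int \<alpha> (\<lambda>u. a u * y2 u) s" if "s \<in> {t..}" for s
    using RL_int_diff[OF set_integrable_RL_integrand[OF y1] set_integrable_RL_integrand[OF y2]] that t
    by (simp add: right_diff_distrib)
  hence "tail_int (\<lambda>u. y1 u - y2 u) t = (LINT s:{t..}|lborel.
      RL_int \<alpha> (\<lambda>u. a u * y1 u) s / s\<^sup>2 - RL_int \<alpha> (\<lambda>u. a u * y2 u) s / s\<^sup>2)"
    unfolding tail_int_def by (intro set_lebesgue_integral_cong) (auto simp: diff_divide_distrib)
  also have "\<dots> = tail_int y1 t - tail_int y2 t"
    unfolding tail_int_def
    by (rule set_integral_diff(2)[OF set_integrable_tail_int[OF y1 t] set_integrable_tail_int[OF y2 t]])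
  finally show ?thesis .
qed

lemma scaled_tail_int_bound:
  assumes y: "growth_bounded B M y" and t: "t > 0"
  shows "\<bar>t powr (1 - \<alpha>) * (t * tail_int y t / Gamma \<alpha>)\<bar> \<le> (B * kappa + M * chi) / ((2 - \<alpha>) * Gamma \<alpha>)"
proof -
  have "\<bar>t powr (1 - \<alpha>) * (t * tail_int y t / Gamma \<alpha>)\<bar> = t powr (1 - \<alpha>) * t * \<bar>tail_int y t\<bar> / Gamma \<alpha>"
    using t Gamma_alpha_pos by (simp add: abs_mult)
  also have "\<dots> \<le> t powr (1 - \<alpha>) * t * ((B * kappa + M * chi) * t powr (\<alpha> - 2) / (2 - \<alpha>)) / Gamma \<alpha>"
    using tail_int_bound[OF y t] t Gamma_alpha_pos by (intro divide_right_mono mult_left_mono) auto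
  also have "\<dots> = (t powr (1 - \<alpha>) * t * t powr (\<alpha> - 2)) * (B * kappa + M * chi) / ((2 - \<alpha>) * Gamma \<alpha>)"
    using alpha Gamma_alpha_pos by (simp add: field_simps)
  also have "t powr (1 - \<alpha>) * t * t powr (\<alpha> - 2) = 1"
    using t by (simp add: powr_add[symmetric] powr_mult_base mult.assoc)
  finally show ?thesis by simp
qed

text \<open>The substitution \<open>t = e\<^sup>r\<close> turns the weighted space of the paper into the Banach space of
  bounded continuous functions on \<open>\<real>\<close>, where the contraction principle applies.\<close>

definition trial :: "real \<Rightarrow> (real \<Rightarrow>\<^sub>C real) \<Rightarrow> real \<Rightarrow> real" where
  "trial b V t = b * t + t powr (\<alpha> - 1) * apply_bcontfun V (ln t)"

lemma growth_bounded_trial: "growth_bounded \<bar>b\<bar> (norm V) (trial b V)"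
  unfolding growth_bounded_def
proof (intro conjI allI impI)
  show "continuous_on {0<..} (trial b V)" unfolding trial_def
    by (intro continuous_intros continuous_on_compose2[OF continuous_on_apply_bcontfun[of UNIV V]]) auto
  fix t :: real assume t: "t > 0"
  have "\<bar>trial b V t\<bar> \<le> \<bar>b * t\<bar> + \<bar>t powr (\<alpha> - 1) * apply_bcontfun V (ln t)\<bar>"
    unfolding trial_def by (rule abs_triangle_ineq)
  also have "\<bar>t powr (\<alpha> - 1) * apply_bcontfun V (ln t)\<bar> \<le> t powr (\<alpha> - 1) * norm V"
    using norm_bounded[of V "ln t"] by (simp add: abs_mult mult_left_mono)
  finally show "\<bar>trial b V t\<bar> \<le> \<bar>b\<bar> * t + norm V * t powr (\<alpha> - 1)"
    using t by (simp add: abs_mult mult.commute)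
qed auto

definition solution_map :: "real \<Rightarrow> (real \<Rightarrow>\<^sub>C real) \<Rightarrow> (real \<Rightarrow>\<^sub>C real)" where
  "solution_map b V =
     Bcontfun (\<lambda>r. exp r powr (1 - \<alpha>) * (exp r * tail_int (trial b V) (exp r) / Gamma \<alpha>))"

lemma solution_map_apply:
  "apply_bcontfun (solution_map b V) r =
     exp r powr (1 - \<alpha>) * (exp r * tail_int (trial b V) (exp r) / Gamma \<alpha>)"
proof -
  have "(\<lambda>r. exp r powr (1 - \<alpha>) * (exp r * tail_int (trial b V) (exp r) / Gamma \<alpha>)) \<in> bcontfun"
  proof (rule bcontfun_normI)
    show "continuous_on UNIV (\<lambda>r. exp r powr (1 - \<alpha>) * (exp r * tail_int (trial b V) (exp r) / Gamma \<alpha>))"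
      using Gamma_alpha_pos
      by (intro continuous_intros continuous_on_compose2[OF tail_int_continuous_on[OF growth_bounded_trial]]) auto
    show "norm (exp r powr (1 - \<alpha>) * (exp r * tail_int (trial b V) (exp r) / Gamma \<alpha>)) \<le>
        (\<bar>b\<bar> * kappa + norm V * chi) / ((2 - \<alpha>) * Gamma \<alpha>)" for r
      using scaled_tail_int_bound[OF growth_bounded_trial] by simp
  qed
  thus ?thesis unfolding solution_map_def by (simp add: Bcontfun_inverse)
qed

lemma solution_map_contraction:
  "dist (solution_map b V1) (solution_map b V2) \<le> chi / Gamma \<alpha> * dist V1 V2"
proof (rule dist_bound)
  fix r :: real
  define D where "D = dist V1 V2"
  define w where "w t = trial b V1 t - trial b V2 t" for t
  have w: "growth_bounded 0 D w" unfolding growth_bounded_def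
  proof (intro conjI allI impI)
    show "continuous_on {0<..} w" unfolding w_def
      using growth_bounded_trial[of b V1] growth_bounded_trial[of b V2]
      by (intro continuous_intros) (auto simp: growth_bounded_def)
    fix t :: real assume "t > 0"
    have "\<bar>w t\<bar> = t powr (\<alpha> - 1) * \<bar>apply_bcontfun V1 (ln t) - apply_bcontfun V2 (ln t)\<bar>"
      unfolding w_def trial_def by (simp add: abs_mult flip: right_diff_distrib)
    also have "\<dots> \<le> t powr (\<alpha> - 1) * D"
      using dist_bounded[of V1 "ln t" V2] by (intro mult_left_mono) (auto simp: D_def dist_real_def)
    finally show "\<bar>w t\<bar> \<le> 0 * t + D * t powr (\<alpha> - 1)" by (simp add: mult.commute)
  qed (auto simp: D_def)
  have "dist (apply_bcontfun (solution_map b V1) r) (apply_bcontfun (solution_map b V2) r) =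
      \<bar>exp r powr (1 - \<alpha>) * (exp r * tail_int w (exp r) / Gamma \<alpha>)\<bar>"
    unfolding solution_map_apply dist_real_def w_def
    by (simp add: tail_int_diff[OF growth_bounded_trial growth_bounded_trial] algebra_simps diff_divide_distrib)
  also have "\<dots> \<le> (0 * kappa + D * chi) / ((2 - \<alpha>) * Gamma \<alpha>)"
    by (rule scaled_tail_int_bound[OF w]) simp
  also have "\<dots> \<le> chi / Gamma \<alpha> * D"
    using alpha chi_nonneg Gamma_alpha_pos \<open>D = dist V1 V2\<close>
    by (simp add: field_simps mult_left_le_one_le)
  finally show "dist (apply_bcontfun (solution_map b V1) r) (apply_bcontfun (solution_map b V2) r) \<le>
      chi / Gamma \<alpha> * dist V1 V2" by (simp add: D_def)
qed

lemma solution_map_fixed_point: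
  assumes "chi < Gamma \<alpha>"
  shows "\<exists>V. solution_map b V = V"
proof -
  have "\<exists>!V. solution_map b V = V"
    using assms chi_nonneg Gamma_alpha_pos solution_map_contraction
    by (intro banach_fix_type[of "chi / Gamma \<alpha>"]) auto
  thus ?thesis by blast
qed

lemma fixed_point_integral_equation:
  assumes V: "solution_map b V = V" and t: "t > 0"
  shows "trial b V t = b * t + t * tail_int (trial b V) t / Gamma \<alpha>"
proof -
  have "apply_bcontfun V (ln t) = t powr (1 - \<alpha>) * (t * tail_int (trial b V) t / Gamma \<alpha>)"
    using solution_map_apply[of b V "ln t"] V t by simp
  moreover have "t powr (\<alpha> - 1) * t powr (1 - \<alpha>) = 1"
    using t by (simp add: powr_add[symmetric])
  ultimately show ?thesis
    unfolding trial_def by (metis (no_types, lifting) mult.assoc mult_1)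
qed

lemma integral_equation_solves_RL_equation:
  assumes x: "growth_bounded B M x"
    and eq: "\<And>t. t > 0 \<Longrightarrow> x t = b * t + t * tail_int x t / Gamma \<alpha>"
  shows "\<exists>x'. (\<forall>t>0. (x has_real_derivative x' t) (at t)) \<and> continuous_on {0<..} x' \<and>
    RL_admissible \<alpha> (\<lambda>t. t * x' t - x t) \<and>
    (\<forall>t>0. \<exists>D. has_RL_derivative_at \<alpha> (\<lambda>s. s * x' s - x s) D t \<and> D + a t * x t = 0)"
proof -
  define F where "F = RL_int \<alpha> (\<lambda>u. a u * x u)"
  define x' where "x' t = b + tail_int x t / Gamma \<alpha> - F t / (t * Gamma \<alpha>)" for t
  have g: "powr_singular \<alpha> (\<lambda>u. a u * x u)" by (rule powr_singular_a_mult[OF x])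
  have G: "Gamma \<alpha> > 0" by (rule Gamma_alpha_pos)
  have deriv: "(x has_real_derivative x' t) (at t)" if t: "t > 0" for t
  proof -
    have "((\<lambda>s. b * s + s * tail_int x s / Gamma \<alpha>) has_real_derivative x' t) (at t)"
      using t G
      by (auto intro!: derivative_eq_intros has_real_derivative_tail_int[OF x t]
          simp: x'_def F_def field_simps power2_eq_square)
    thus ?thesis
      by (rule has_field_derivative_transform_within_open[of _ _ _ "{0<..}"]) (use t eq in auto)
  qed
  have "continuous_on {0<..} x'"
    unfolding x'_def F_def using G
    by (intro continuous_intros tail_int_continuous_on[OF x] RL_int_continuous_on[OF alpha g]) auto
  moreover have operator_argument: "s * x' s - x s = - 1 / Gamma \<alpha> * F s" if "s > 0" for s
    using that eq[OF that] G by (simp add: x'_def field_simps)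
  moreover have "RL_admissible \<alpha> (\<lambda>t. t * x' t - x t)"
    by (rule RL_admissible_RL_int[OF alpha g, of _ "- 1 / Gamma \<alpha>"]) (simp add: operator_argument F_def)
  moreover have "has_RL_derivative_at \<alpha> (\<lambda>s. s * x' s - x s) (- a t * x t) t" if "t > 0" for t
    using has_RL_derivative_RL_int[OF alpha g _ that, of _ "- 1 / Gamma \<alpha>"] operator_argument G
    by (simp add: F_def)
  ultimately show ?thesis using deriv by (intro exI[of _ x']) fastforce
qed

lemma trial_asymptotics:
  "(\<exists>h :: real \<Rightarrow> real. h \<in> O[at_top](\<lambda>_. 1) \<and>
       (\<forall>\<^sub>F t in at_top. trial b V t = (c + h t) * t powr (\<alpha> - 1) + b * t)) \<and>
   (\<lambda>t. trial b V t - b * t) \<in> O[at_top](\<lambda>t. t powr (\<alpha> - 1))"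
proof (intro conjI exI)
  define h where "h t = apply_bcontfun V (ln t) - c" for t
  have "norm (h t) \<le> (norm V + \<bar>c\<bar>) * norm (1::real)" for t
    using norm_bounded[of V "ln t"] abs_triangle_ineq4[of "apply_bcontfun V (ln t)" c]
    by (simp add: h_def)
  thus "h \<in> O[at_top](\<lambda>_. 1)" by (intro bigoI always_eventually allI)
  show "\<forall>\<^sub>F t in at_top. trial b V t = (c + h t) * t powr (\<alpha> - 1) + b * t"
    by (simp add: h_def trial_def algebra_simps)
  have "norm (trial b V t - b * t) \<le> norm V * norm (t powr (\<alpha> - 1))" for t
    using norm_bounded[of V "ln t"] by (simp add: trial_def abs_mult mult.commute mult_right_mono)
  thus "(\<lambda>t. trial b V t - b * t) \<in> O[at_top](\<lambda>t. t powr (\<alpha> - 1))"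
    by (intro bigoI always_eventually allI)
qed

end

theorem theorem2:
  fixes \<alpha> :: real and a :: "real \<Rightarrow> real" and c b :: real
  assumes alpha: "0 < \<alpha>" "\<alpha> < 1"
    and a_cont: "continuous_on {0..} a"
    and int1: "set_integrable lborel {0<..} (\<lambda>t. t * \<bar>a t\<bar>)"
    and int2: "\<And>t. t > 0 \<Longrightarrow>
        set_integrable lborel {0<..<t} (\<lambda>s. s * \<bar>a s\<bar> / (t - s) powr (1 - \<alpha>))"
    and sup1: "bdd_above ((\<lambda>t. t powr (1 - \<alpha>) *
        (LINT s:{0<..<t}|lborel. s * \<bar>a s\<bar> / (t - s) powr (1 - \<alpha>))) ` {0<..})"
    and int3: "set_integrable lborel {0<..} (\<lambda>s. \<bar>a s\<bar> / s powr (1 - \<alpha>))"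
    and int4: "\<And>t. t > 0 \<Longrightarrow>
        set_integrable lborel {0<..<t}
          (\<lambda>s. \<bar>a s\<bar> / ((t - s) powr (1 - \<alpha>) * s powr (1 - \<alpha>)))"
    and sup2: "bdd_above ((\<lambda>t. t powr (1 - \<alpha>) *
        (LINT s:{0<..<t}|lborel. \<bar>a s\<bar> / ((t - s) powr (1 - \<alpha>) * s powr (1 - \<alpha>)))) ` {0<..})"
    and k3: "(1 / Gamma \<alpha>) *
        ((LINT s:{0<..}|lborel. \<bar>a s\<bar> / s powr (1 - \<alpha>)) +
         (SUP t\<in>{0<..}. t powr (1 - \<alpha>) *
            (LINT s:{0<..<t}|lborel. \<bar>a s\<bar> / ((t - s) powr (1 - \<alpha>) * s powr (1 - \<alpha>))))) < 1"
    and b_nz: "b \<noteq> 0"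
  shows "\<exists>x x' :: real \<Rightarrow> real.
      (\<forall>t>0. (x has_real_derivative x' t) (at t)) \<and> continuous_on {0<..} x' \<and>
      RL_admissible \<alpha> (\<lambda>t. t * x' t - x t) \<and>
      (\<forall>t>0. \<exists>D. has_RL_derivative_at \<alpha> (\<lambda>s. s * x' s - x s) D t \<and> D + a t * x t = 0) \<and>
      (\<exists>h :: real \<Rightarrow> real. h \<in> O[at_top](\<lambda>_. 1) \<and>
         (\<forall>\<^sub>F t in at_top. x t = (c + h t) * t powr (\<alpha> - 1) + b * t)) \<and>
      (\<lambda>t. x t - b * t) \<in> O[at_top](\<lambda>t. t powr (\<alpha> - 1))"
proof -
  interpret RL_coefficient \<alpha> a
    by unfold_locales (use alpha a_cont int2 sup1 int4 sup2 in auto)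
  have "0 \<le> (LINT s:{0<..}|lborel. \<bar>a s\<bar> / s powr (1 - \<alpha>))"
    unfolding set_lebesgue_integral_def
    by (intro Bochner_Integration.integral_nonneg) (auto simp: indicator_def)
  hence "chi < Gamma \<alpha>"
    using k3 Gamma_alpha_pos unfolding chi_def by (simp add: field_simps)
  then obtain V where V: "solution_map b V = V"
    using solution_map_fixed_point by blast
  from integral_equation_solves_RL_equation[OF growth_bounded_trial fixed_point_integral_equation[OF V]]
  show ?thesis using trial_asymptotics[of b V c] by blast
qed

end
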